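(* Let $0<\alpha<1$ and $1\le i\le k\le 6$, and let $w^{(k,i)}_{n,j}$, $\omega^{(k,i)}_m$ be the weights defined in the context. Let $u_0,\dots,u_{k-1}\in\mathbb{C}$ be arbitrary (bounded) starting values and define the power series $$g^{(k,i)}(\xi)=\sum_{n=0}^{\infty}g^{(k,i)}_n\xi^n,\qquad g^{(k,i)}_n=-\sum_{j=0}^{k-1}u_{j}\big(w_{n+k,j}^{(k,i)}+\omega_{n+k-j}^{(k,i)}\big).$$ Then $g^{(k,i)}_n\to 0$ as $n\to\infty$.
   Context: Uniform grid $t_n=n\Delta t$, $\Delta t>0$, $I_j=[t_{j-1},t_j]$. For a function $u$ and integers $m\ge1$, $j$, $q$, let $p^{m}_{j,q}$ be the polynomial of degree at most $m$ interpolating $u$ at $t_{j+q-m-1},\dots,t_{j+q-1}$. For $1\le i\le k\le 6$ and $n\ge k$, let $P^{k}_{i,n}$ be the continuous piecewise polynomial on $[0,t_n]$ equal on $I_j$ to $p^{k-1}_{j,k-j}$ for $1\le j\le k-i$, to $p^{k}_{j,i}$ for $k-i+1\le j\le n-i+1$, and to $p^{k}_{j,n+1-j}$ for $n-i+2\le j\le n$, and set $D^{\alpha}_{k,i}u_n=\frac{1}{\Gamma(1-\alpha)}\int_0^{t_n}(t_n-\xi)^{-\alpha}(P^{k}_{i,n})'(\xi)\,\mathrm{d}\xi$. This is a linear combination of $u_0=u(t_0),\dots,u_n=u(t_n)$; for $k\le j\le n$ the coefficient of $u_j$ in $(\Delta t)^{\alpha}D^{\alpha}_{k,i}u_n$ depends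 only on $n-j$ (not on $n$ or $\Delta t$ separately) and is denoted $\omega^{(k,i)}_{n-j}$; this defines $\omega^{(k,i)}_m$ for all $m\ge 0$. The weights $w^{(k,i)}_{n,j}$ ($0\le j\le k-1$, $n\ge k$) are then defined by $(\Delta t)^{\alpha}D^{\alpha}_{k,i}u_n=\sum_{j=0}^{k-1}w^{(k,i)}_{n,j}u_j+\sum_{j=0}^{n}\omega^{(k,i)}_{n-j}u_j$ (for arbitrary values $u_j$). *)

theory Defs
  imports "HOL-Analysis.Analysis" "HOL-Computational_Algebra.Polynomial"
begin

text \<open>Grid points t_l = l * dt.  The polynomial p^m_{j,q} of degree at most m
interpolating the grid values u_l at t_{j+q-m-1}, ..., t_{j+q-1}.
(In every use below j+q >= m+1, so the natural-number subtraction never truncates.)\<close>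
definition interp :: "real \<Rightarrow> (nat \<Rightarrow> real) \<Rightarrow> nat \<Rightarrow> nat \<Rightarrow> nat \<Rightarrow> real poly" where
  "interp dt u m j q =
     (THE p. degree p \<le> m \<and>
        (\<forall>l\<in>{j + q - m - 1 .. j + q - 1}. poly p (real l * dt) = u l))"

text \<open>The polynomial piece of P^k_{i,n} on I_j = [t_{j-1}, t_j].\<close>
definition piece :: "real \<Rightarrow> (nat \<Rightarrow> real) \<Rightarrow> nat \<Rightarrow> nat \<Rightarrow> nat \<Rightarrow> nat \<Rightarrow> real poly" where
  "piece dt u k i n j =
     (if j \<le> k - i then interp dt u (k - 1) j (k - j)
      else if j \<le> n - i + 1 then interp dt u k j i
      else interp dt u k j (n + 1 - j))"

text \<open>D^alpha_{k,i} u_n = 1/Gamma(1-alpha) * int_0^{t_n} (t_n - xi)^(-alpha) (P^k_{i,n})'(xi) dxi,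
  written as the sum of the integrals over the grid intervals I_1, ..., I_n.\<close>
definition Dfrac :: "real \<Rightarrow> real \<Rightarrow> nat \<Rightarrow> nat \<Rightarrow> (nat \<Rightarrow> real) \<Rightarrow> nat \<Rightarrow> real" where
  "Dfrac dt \<alpha> k i u n =
     (1 / Gamma (1 - \<alpha>)) *
     (\<Sum>j = 1..n. integral {real (j - 1) * dt .. real j * dt}
        (\<lambda>\<xi>. (real n * dt - \<xi>) powr (- \<alpha>) * poly (pderiv (piece dt u k i n j)) \<xi>))"

text \<open>Coefficient of u_j in (dt)^alpha D^alpha_{k,i} u_n (D is linear in the grid values).\<close>
definition coef :: "real \<Rightarrow> real \<Rightarrow> nat \<Rightarrow> nat \<Rightarrow> nat \<Rightarrow> nat \<Rightarrow> real" where
  "coef dt \<alpha> k i n j = dt powr \<alpha> * Dfrac dt \<alpha> k i (\<lambda>l. if l = j then 1 else 0) n"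

text \<open>omega^{(k,i)}_m: the coefficient of u_j for k <= j <= n, with n - j = m (taking n = m + k, j = k).\<close>
definition omega :: "real \<Rightarrow> real \<Rightarrow> nat \<Rightarrow> nat \<Rightarrow> nat \<Rightarrow> real" where
  "omega dt \<alpha> k i m = coef dt \<alpha> k i (m + k) k"

definition wstart :: "real \<Rightarrow> real \<Rightarrow> nat \<Rightarrow> nat \<Rightarrow> nat \<Rightarrow> nat \<Rightarrow> real" where
  "wstart dt \<alpha> k i n j = coef dt \<alpha> k i n j - omega dt \<alpha> k i (n - j)"

definition gcoef :: "real \<Rightarrow> real \<Rightarrow> nat \<Rightarrow> nat \<Rightarrow> (nat \<Rightarrow> complex) \<Rightarrow> nat \<Rightarrow> complex" where
  "gcoef dt \<alpha> k i u n =
     - (\<Sum>j<k. u j * complex_of_real (wstart dt \<alpha> k i (n + k) j + omega dt \<alpha> k i (n + k - j)))"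

end

theory Submission
  imports Defs "HOL-Real_Asymp.Real_Asymp"
begin

text \<open>Since wstart is defined as a coefficient minus omega, the sequence g_n is just
  -\<Sum>_{j<k} u_j c_{n+k,j}, where c_{N,j} is the coefficient of u_j in (\<Delta>t)^\<alpha> D u_N.
  Fix j. Every interpolant of the unit datum at j whose k+1 nodes avoid j is zero, so the
  pieces of P^k_{i,N} vanish on all intervals beyond t_{j+k}, while those on [0, t_{j+k}]
  no longer depend on N once N is large. Hence c_{N,j} is a fixed finite sum of integrals
  over [0, t_{j+k}] of (t_N - \<xi>)^{-\<alpha>} times fixed polynomials, and the kernel is bounded
  there by (t_N - t_{j+k})^{-\<alpha>} \<rightarrow> 0.\<close>

lemma interp_eq_0:
  assumes dt: "0 < dt" and nodes: "m + 1 \<le> j + q"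
    and vanish: "\<forall>l\<in>{j + q - m - 1 .. j + q - 1}. v l = 0"
  shows "interp dt v m j q = 0"
  unfolding interp_def
proof (rule the_equality)
  show "degree (0::real poly) \<le> m \<and> (\<forall>l\<in>{j + q - m - 1..j + q - 1}. poly 0 (real l * dt) = v l)"
    using vanish by simp
next
  fix p :: "real poly"
  let ?S = "{j + q - m - 1..j + q - 1}"
  assume p: "degree p \<le> m \<and> (\<forall>l\<in>?S. poly p (real l * dt) = v l)"
  show "p = 0"
  proof (rule ccontr)
    assume "p \<noteq> 0"
    have roots: "(\<lambda>l. real l * dt) ` ?S \<subseteq> {x. poly p x = 0}"
      using p vanish by auto
    have "inj_on (\<lambda>l. real l * dt) ?S"
      using dt by (auto simp: inj_on_def)
    then have "m + 1 = card ((\<lambda>l. real l * dt) ` ?S)"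
      using nodes by (simp add: card_image)
    also have "\<dots> \<le> card {x. poly p x = 0}"
      by (rule card_mono[OF poly_roots_finite[OF \<open>p \<noteq> 0\<close>] roots])
    also have "\<dots> \<le> degree p"
      by (rule card_poly_roots_bound[OF \<open>p \<noteq> 0\<close>])
    finally show False using p by linarith
  qed
qed

lemma piece_indep_n:
  assumes "l + i \<le> n + 1" "l + i \<le> n' + 1"
  shows "piece dt u k i n l = piece dt u k i n' l"
  using assms unfolding piece_def by auto

lemma piece_unit_eq_0:
  assumes dt: "0 < dt" and "1 \<le> i" "j + k < l" "l \<le> n"
  shows "piece dt (\<lambda>l. if l = j then 1 else 0) k i n l = 0"
proof -
  have "interp dt (\<lambda>l. if l = j then 1 else 0) k l i = 0"
    by (rule interp_eq_0[OF dt]) (use assms in auto)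
  moreover have "interp dt (\<lambda>l. if l = j then 1 else 0) k l (n + 1 - l) = 0"
    by (rule interp_eq_0[OF dt]) (use assms in auto)
  ultimately show ?thesis
    using assms unfolding piece_def by auto
qed

lemma Dfrac_eq_sum_initial:
  assumes "L \<le> n" and vanish: "\<And>l. L < l \<Longrightarrow> l \<le> n \<Longrightarrow> piece dt u k i n l = 0"
  shows "Dfrac dt \<alpha> k i u n =
    (1 / Gamma (1 - \<alpha>)) *
    (\<Sum>l = 1..L. integral {real (l - 1) * dt .. real l * dt}
       (\<lambda>\<xi>. (real n * dt - \<xi>) powr (- \<alpha>) * poly (pderiv (piece dt u k i n l)) \<xi>))"
proof -
  have "{1..n} = {1..L} \<union> {L + 1..n}" "{1..L} \<inter> {L + 1..n} = {}"
    using \<open>L \<le> n\<close> by auto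
  then show ?thesis
    unfolding Dfrac_def by (simp add: sum.union_disjoint vanish)
qed

lemma integral_powr_kernel_tendsto_0:
  fixes f :: "real \<Rightarrow> real"
  assumes dt: "0 < dt" and \<alpha>: "0 < \<alpha>" and f: "continuous_on {a..b} f"
  shows "(\<lambda>n. integral {a..b} (\<lambda>\<xi>. (real n * dt - \<xi>) powr (- \<alpha>) * f \<xi>)) \<longlonglongrightarrow> 0"
proof -
  obtain B where "0 < B" and "\<forall>y\<in>f ` {a..b}. norm y \<le> B"
    using compact_imp_bounded[OF compact_continuous_image[OF f compact_Icc]]
    unfolding bounded_pos by blast
  then have B: "\<And>x. x \<in> {a..b} \<Longrightarrow> \<bar>f x\<bar> \<le> B"
    by auto
  let ?bound = "\<lambda>n::nat. B * (real n * dt - b) powr (- \<alpha>) * Henstock_Kurzweil_Integration.content {a..b}"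
  have "filterlim (\<lambda>n::nat. real n * dt - b) at_top sequentially"
    using dt by real_asymp
  then have "?bound \<longlonglongrightarrow> 0"
    using tendsto_neg_powr[of "- \<alpha>"] \<alpha>
    by (auto intro!: tendsto_mult_left_zero tendsto_mult_right_zero)
  moreover have "\<forall>\<^sub>F n in sequentially.
      norm (integral {a..b} (\<lambda>\<xi>. (real n * dt - \<xi>) powr (- \<alpha>) * f \<xi>)) \<le> ?bound n"
  proof -
    obtain n0 :: nat where n0: "b < real n0 * dt"
      using reals_Archimedean3[OF dt] by blast
    have "norm (integral {a..b} (\<lambda>\<xi>. (real n * dt - \<xi>) powr (- \<alpha>) * f \<xi>)) \<le> ?bound n"
      if "n0 \<le> n" for n
    proof -
      have "b < real n * dt"
        using n0 that dt by (meson le_less_trans mult_right_mono of_nat_mono less_imp_le not_less)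
      have kernel: "norm ((real n * dt - x) powr (- \<alpha>) * f x) \<le> B * (real n * dt - b) powr (- \<alpha>)"
        if x: "x \<in> {a..b}" for x
      proof -
        have "(real n * dt - x) powr (- \<alpha>) \<le> (real n * dt - b) powr (- \<alpha>)"
          by (rule powr_mono2') (use \<alpha> x \<open>b < real n * dt\<close> in auto)
        then show ?thesis
          using B[OF x] by (simp add: abs_mult mult_mono' mult.commute)
      qed
      show ?thesis
      proof (cases "(\<lambda>\<xi>. (real n * dt - \<xi>) powr (- \<alpha>) * f \<xi>) integrable_on {a..b}")
        case True
        then show ?thesis
          using kernel \<open>0 < B\<close> by (intro has_integral_bound_real[where S="{}"]) auto
      next
        case False
        with \<open>0 < B\<close> show ?thesis by (simp add: not_integrable_integral)
      qed
    qed
    then show ?thesis by (rule eventually_sequentiallyI)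
  qed
  ultimately show ?thesis
    by (rule Lim_null_comparison[rotated])
qed

lemma coef_tendsto_0:
  assumes dt: "0 < dt" and \<alpha>: "0 < \<alpha>" and "1 \<le> i"
  shows "(\<lambda>n. coef dt \<alpha> k i n j) \<longlonglongrightarrow> 0"
proof -
  define e where "e = (\<lambda>l::nat. if l = j then 1 else 0 :: real)"
  define L where "L = j + k"
  define F where "F = (\<lambda>n l. integral {real (l - 1) * dt .. real l * dt}
    (\<lambda>\<xi>. (real n * dt - \<xi>) powr (- \<alpha>) * poly (pderiv (piece dt e k i (L + i) l)) \<xi>))"
  have coef_eq: "coef dt \<alpha> k i n j = dt powr \<alpha> * ((1 / Gamma (1 - \<alpha>)) * (\<Sum>l = 1..L. F n l))"
    if "L + i \<le> n" for n
  proof -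
    have "piece dt e k i n l = piece dt e k i (L + i) l" if "l \<le> L" for l
      by (rule piece_indep_n) (use that \<open>L + i \<le> n\<close> in auto)
    moreover have "piece dt e k i n l = 0" if "L < l" "l \<le> n" for l
      unfolding e_def by (rule piece_unit_eq_0) (use that dt \<open>1 \<le> i\<close> in \<open>auto simp: L_def\<close>)
    ultimately have "Dfrac dt \<alpha> k i e n = (1 / Gamma (1 - \<alpha>)) * (\<Sum>l = 1..L. F n l)"
      unfolding F_def using that by (subst Dfrac_eq_sum_initial[where L = L]) auto
    then show ?thesis by (simp add: coef_def e_def)
  qed
  have "(\<lambda>n. F n l) \<longlonglongrightarrow> 0" for l
    unfolding F_def by (intro integral_powr_kernel_tendsto_0 dt \<alpha> continuous_intros)
  then have "(\<lambda>n. \<Sum>l = 1..L. F n l) \<longlonglongrightarrow> 0"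
    using tendsto_sum[of "{1..L}" "\<lambda>l n. F n l" "\<lambda>_. 0"] by simp
  then have "(\<lambda>n. dt powr \<alpha> * ((1 / Gamma (1 - \<alpha>)) * (\<Sum>l = 1..L. F n l))) \<longlonglongrightarrow> 0"
    by (intro tendsto_mult_right_zero)
  then show ?thesis
    by (rule Lim_transform_eventually)
       (rule eventually_sequentiallyI[of "L + i"], simp add: coef_eq)
qed

lemma gcoef_eq_coef:
  "gcoef dt \<alpha> k i u n = - (\<Sum>j<k. u j * complex_of_real (coef dt \<alpha> k i (n + k) j))"
  unfolding gcoef_def wstart_def by simp

theorem lemma3p4:
  fixes \<alpha> dt :: real and k i :: nat and u :: "nat \<Rightarrow> complex"
  assumes "0 < \<alpha>" "\<alpha> < 1" "1 \<le> i" "i \<le> k" "k \<le> 6" "0 < dt"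
  shows "(\<lambda>n. gcoef dt \<alpha> k i u n) \<longlonglongrightarrow> 0"
proof -
  have "(\<lambda>n. coef dt \<alpha> k i (n + k) j) \<longlonglongrightarrow> 0" for j
    using LIMSEQ_ignore_initial_segment[OF coef_tendsto_0[OF \<open>0 < dt\<close> \<open>0 < \<alpha>\<close> \<open>1 \<le> i\<close>]]
    by simp
  then have "(\<lambda>n. - (\<Sum>j<k. u j * complex_of_real (coef dt \<alpha> k i (n + k) j)))
      \<longlonglongrightarrow> - (\<Sum>j<k. u j * complex_of_real 0)"
    by (intro tendsto_intros)
  then show ?thesis
    by (simp add: gcoef_eq_coef)
qed

end
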